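(* Let $(R,\mathfrak m,k)$ be a commutative noetherian local ring. Let $A$ and $L$ be $R$-modules such that $A$ is artinian and $\mathfrak m^n\Gamma_{\mathfrak m}(L)=0$ for some $n\geq 1$. Fix an index $t\geq 0$ such that $\mathfrak m^tA=\mathfrak m^{t+1}A$, and let $s$ be an integer with $s\geq\min(n,t)$. Then $\operatorname{len}_R(\operatorname{Hom}_R(A,L))\leq\beta^R_0(A)\,\operatorname{len}_R(0:_L\mathfrak m^s)$, with the convention $0\cdot\infty=0$.
   Context: $\Gamma_{\mathfrak m}(L)=\{x\in L: \mathfrak m^nx=0 \text{ for } n\gg0\}$; $\beta^R_0(A)=\operatorname{len}_R(k\otimes_RA)$; $(0:_L\mathfrak m^s)=\{x\in L:\mathfrak m^sx=0\}$. *)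

theory Defs
  imports "HOL-Algebra.Algebra" "HOL-Library.Extended_Nat"
begin

definition ideal_power :: "('a, 'b) ring_scheme \<Rightarrow> 'a set \<Rightarrow> nat \<Rightarrow> 'a set" where
  "ideal_power R I k = I [^]\<^bsub>ideals_set R\<^esub> k"

definition mod_ideal_prod :: "('a, 'c) ring_scheme \<Rightarrow> ('a, 'b) module \<Rightarrow> 'a set \<Rightarrow> 'b set \<Rightarrow> 'b set" where
  "mod_ideal_prod R M I N =
     \<Inter>{H. submodule H R M \<and> {a \<odot>\<^bsub>M\<^esub> x | a x. a \<in> I \<and> x \<in> N} \<subseteq> H}"

definition Gamma :: "('a, 'c) ring_scheme \<Rightarrow> 'a set \<Rightarrow> ('a, 'b) module \<Rightarrow> 'b set" where
  "Gamma R m L = {x \<in> carrier L. \<exists>k. \<forall>a \<in> ideal_power R m k. a \<odot>\<^bsub>L\<^esub> x = \<zero>\<^bsub>L\<^esub>}"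

definition annihilated :: "('a, 'b) module \<Rightarrow> 'a set \<Rightarrow> 'b set" where
  "annihilated L I = {x \<in> carrier L. \<forall>a \<in> I. a \<odot>\<^bsub>L\<^esub> x = \<zero>\<^bsub>L\<^esub>}"

definition subquot_length :: "('a, 'c) ring_scheme \<Rightarrow> ('a, 'b) module \<Rightarrow> 'b set \<Rightarrow> 'b set \<Rightarrow> enat" where
  "subquot_length R M Lo Hi = Sup {enat k | k. \<exists>f :: nat \<Rightarrow> 'b set.
      (\<forall>i\<le>k. submodule (f i) R M \<and> Lo \<subseteq> f i \<and> f i \<subseteq> Hi) \<and> (\<forall>i<k. f i \<subset> f (Suc i))}"

definition mod_length :: "('a, 'c) ring_scheme \<Rightarrow> ('a, 'b) module \<Rightarrow> 'b set \<Rightarrow> enat" where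
  "mod_length R M N = subquot_length R M {\<zero>\<^bsub>M\<^esub>} N"

text \<open>beta_0(A) = len(k \<otimes> A) = len(A / m A).\<close>
definition beta0 :: "('a, 'c) ring_scheme \<Rightarrow> 'a set \<Rightarrow> ('a, 'b) module \<Rightarrow> enat" where
  "beta0 R m A = subquot_length R A (mod_ideal_prod R A m (carrier A)) (carrier A)"

definition Hom_mod :: "('a, 'c) ring_scheme \<Rightarrow> ('a, 'd) module \<Rightarrow> ('a, 'b) module \<Rightarrow> ('a, 'd \<Rightarrow> 'b) module" where
  "Hom_mod R A L =
    \<lparr> partial_object.carrier = {f. f \<in> carrier A \<rightarrow> carrier L \<and> f \<in> extensional (carrier A) \<and>
                    (\<forall>x\<in>carrier A. \<forall>y\<in>carrier A. f (x \<oplus>\<^bsub>A\<^esub> y) = f x \<oplus>\<^bsub>L\<^esub> f y) \<and>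
                    (\<forall>a\<in>carrier R. \<forall>x\<in>carrier A. f (a \<odot>\<^bsub>A\<^esub> x) = a \<odot>\<^bsub>L\<^esub> f x)},
      monoid.mult = (\<lambda>f g. undefined),
      monoid.one = undefined,
      ring.zero = (\<lambda>x\<in>carrier A. \<zero>\<^bsub>L\<^esub>),
      ring.add = (\<lambda>f g. \<lambda>x\<in>carrier A. f x \<oplus>\<^bsub>L\<^esub> g x),
      module.smult = (\<lambda>a f. \<lambda>x\<in>carrier A. a \<odot>\<^bsub>L\<^esub> f x) \<rparr>"

definition artinian_module :: "('a, 'c) ring_scheme \<Rightarrow> ('a, 'b) module \<Rightarrow> bool" where
  "artinian_module R M \<longleftrightarrow> module R M \<and>
     \<not> (\<exists>f :: nat \<Rightarrow> 'b set. (\<forall>i. submodule (f i) R M) \<and> (\<forall>i. f (Suc i) \<subset> f i))"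

definition noeth_local_ring :: "('a, 'c) ring_scheme \<Rightarrow> 'a set \<Rightarrow> bool" where
  "noeth_local_ring R m \<longleftrightarrow> cring R \<and> noetherian_ring R \<and> maximalideal m R \<and>
     (\<forall>I. maximalideal I R \<longrightarrow> I = m)"

end

theory Submission
  imports Defs
begin

text \<open>Over a noetherian local ring every element of the artinian module \<open>A\<close> is killed by a
  power of \<open>m\<close> (the chain \<open>m\<^sup>k x\<close> stabilises and Nakayama applies), so every
  homomorphism \<open>f : A \<rightarrow> L\<close> lands in \<open>\<Gamma>\<^sub>m(L)\<close>. If \<open>s \<ge> n\<close> this already gives
  \<open>m\<^sup>s f(A) = 0\<close>; if \<open>s \<ge> t\<close>, then \<open>T = m\<^sup>t A\<close> satisfies \<open>T = m\<^sup>n T\<close>, so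
  \<open>f(T) = m\<^sup>n f(T) = 0\<close> and again \<open>m\<^sup>s f(A) \<subseteq> f(T) = 0\<close>. Hence \<open>Hom(A, L) = Hom(A, N)\<close>
  with \<open>N = (0 :\<^sub>L m\<^sup>s)\<close>.

  Now lift generators \<open>a\<^sub>1, \<dots>, a\<^sub>b\<close> of \<open>A / m A\<close>, \<open>b = \<beta>\<^sub>0(A)\<close>. The homomorphisms vanishing on
  \<open>a\<^sub>1, \<dots>, a\<^sub>i\<close> form a descending filtration of \<open>Hom(A, L)\<close>; evaluation at \<open>a\<^sub>i\<^sub>+\<^sub>1\<close> embeds
  each of its factors into \<open>N\<close>, and the last term is zero by Nakayama, because a
  homomorphism killing the \<open>a\<^sub>i\<close> and \<open>m\<^sup>s A\<close> kills \<open>A = \<langle>a\<^sub>1, \<dots>, a\<^sub>b\<rangle> + m A\<close>. Subadditivity of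
  length gives \<open>len Hom(A, L) \<le> b \<cdot> len N\<close>.\<close>

lemma (in module) submodule_zero: "submodule H R M \<Longrightarrow> \<zero>\<^bsub>M\<^esub> \<in> H"
  using subgroup.one_closed[OF submodule.axioms(1)] by fastforce

lemma (in module) submodule_Inter:
  assumes "\<And>H. H \<in> S \<Longrightarrow> submodule H R M" and "S \<noteq> {}"
  shows "submodule (\<Inter>S) R M"
proof (rule submoduleI)
  show "\<Inter>S \<subseteq> carrier M" using assms submoduleE(1) by blast
  show "\<zero>\<^bsub>M\<^esub> \<in> \<Inter>S" using assms submodule_zero by blast
  show "\<ominus>\<^bsub>M\<^esub> a \<in> \<Inter>S" if "a \<in> \<Inter>S" for a using that assms submoduleE(3) by blast
  show "a \<oplus>\<^bsub>M\<^esub> b \<in> \<Inter>S" if "a \<in> \<Inter>S" "b \<in> \<Inter>S" for a b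
    using that assms submoduleE(5) by blast
  show "a \<odot>\<^bsub>M\<^esub> x \<in> \<Inter>S" if "a \<in> carrier R" "x \<in> \<Inter>S" for a x
    using that assms submoduleE(4) by blast
qed

text \<open>The constants of the statement take modules of type \<^typ>\<open>('a, 'b) module\<close>, not
  arbitrary module schemes, hence this specialised copy of the locale.\<close>

locale plain_module = module R M for R :: "('a, 'c) ring_scheme" (structure) and M :: "('a, 'b) module"

lemma (in plain_module) mod_ideal_prod_submodule:
  assumes "I \<subseteq> carrier R" and "N \<subseteq> carrier M"
  shows "submodule (mod_ideal_prod R M I N) R M"
  unfolding mod_ideal_prod_def
  by (rule submodule_Inter) (use carrier_is_submodule assms in blast)+

lemma (in plain_module) mod_ideal_prod_mem: "a \<in> I \<Longrightarrow> x \<in> N \<Longrightarrow> a \<odot>\<^bsub>M\<^esub> x \<in> mod_ideal_prod R M I N"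
  unfolding mod_ideal_prod_def by blast

lemma (in plain_module) mod_ideal_prod_least:
  "submodule H R M \<Longrightarrow> (\<And>a x. a \<in> I \<Longrightarrow> x \<in> N \<Longrightarrow> a \<odot>\<^bsub>M\<^esub> x \<in> H) \<Longrightarrow>
   mod_ideal_prod R M I N \<subseteq> H"
  unfolding mod_ideal_prod_def by blast

lemma (in plain_module) mod_ideal_prod_subset_carrier:
  "I \<subseteq> carrier R \<Longrightarrow> N \<subseteq> carrier M \<Longrightarrow> mod_ideal_prod R M I N \<subseteq> carrier M"
  using submoduleE(1)[OF mod_ideal_prod_submodule] .

lemma (in plain_module) mod_ideal_prod_mono:
  assumes "I \<subseteq> carrier R" "N \<subseteq> carrier M" "I' \<subseteq> I" "N' \<subseteq> N"
  shows "mod_ideal_prod R M I' N' \<subseteq> mod_ideal_prod R M I N"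
  by (rule mod_ideal_prod_least[OF mod_ideal_prod_submodule[OF assms(1,2)]])
    (use assms mod_ideal_prod_mem in blast)

lemma (in plain_module) subset_mod_ideal_prod_carrier:
  assumes "N \<subseteq> carrier M"
  shows "N \<subseteq> mod_ideal_prod R M (carrier R) N"
proof
  fix x assume "x \<in> N"
  then have "\<one> \<odot>\<^bsub>M\<^esub> x \<in> mod_ideal_prod R M (carrier R) N" by (intro mod_ideal_prod_mem) auto
  with \<open>x \<in> N\<close> assms show "x \<in> mod_ideal_prod R M (carrier R) N" by auto
qed

lemma (in plain_module) mod_ideal_prod_ideal_prod_subset:
  assumes I: "ideal I R" and J: "ideal J R" and N: "N \<subseteq> carrier M"
  shows "mod_ideal_prod R M (ideal_prod R I J) N \<subseteq> mod_ideal_prod R M I (mod_ideal_prod R M J N)"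
proof -
  have Ic: "I \<subseteq> carrier R" and Jc: "J \<subseteq> carrier R" using ideal.Icarr[OF I] ideal.Icarr[OF J] by auto
  let ?H = "mod_ideal_prod R M I (mod_ideal_prod R M J N)"
  have H: "submodule ?H R M"
    by (rule mod_ideal_prod_submodule[OF Ic mod_ideal_prod_subset_carrier[OF Jc N]])
  have "c \<odot>\<^bsub>M\<^esub> x \<in> ?H" if "c \<in> ideal_prod R I J" and x: "x \<in> N" for c x
    using that(1)
  proof (induct c rule: ideal_prod.induct)
    case (prod i j)
    then have "(i \<otimes> j) \<odot>\<^bsub>M\<^esub> x = i \<odot>\<^bsub>M\<^esub> (j \<odot>\<^bsub>M\<^esub> x)"
      using Ic Jc x N by (intro smult_assoc1) auto
    then show ?case using prod x by (simp add: mod_ideal_prod_mem)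
  next
    case (sum s1 s2)
    then have "(s1 \<oplus> s2) \<odot>\<^bsub>M\<^esub> x = s1 \<odot>\<^bsub>M\<^esub> x \<oplus>\<^bsub>M\<^esub> s2 \<odot>\<^bsub>M\<^esub> x"
      using ideal_prod_in_carrier[OF I J] x N by (intro smult_l_distr) auto
    then show ?case using sum submoduleE(5)[OF H] by simp
  qed
  then show ?thesis by (intro mod_ideal_prod_least[OF H])
qed

lemma (in plain_module) mod_ideal_prod_subset_ideal_prod:
  assumes I: "ideal I R" and J: "ideal J R" and N: "N \<subseteq> carrier M"
  shows "mod_ideal_prod R M I (mod_ideal_prod R M J N) \<subseteq> mod_ideal_prod R M (ideal_prod R I J) N"
proof -
  have Ic: "I \<subseteq> carrier R" and Jc: "J \<subseteq> carrier R" using ideal.Icarr[OF I] ideal.Icarr[OF J] by auto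
  let ?H = "mod_ideal_prod R M (ideal_prod R I J) N"
  have H: "submodule ?H R M" by (rule mod_ideal_prod_submodule[OF ideal_prod_in_carrier[OF I J] N])
  let ?K = "{y \<in> carrier M. \<forall>a\<in>I. a \<odot>\<^bsub>M\<^esub> y \<in> ?H}"
  have K: "submodule ?K R M"
  proof (rule submoduleI)
    show "\<zero>\<^bsub>M\<^esub> \<in> ?K" using Ic submodule_zero[OF H] by auto
    show "\<ominus>\<^bsub>M\<^esub> y \<in> ?K" if "y \<in> ?K" for y
      using that Ic submoduleE(3)[OF H] by (auto simp: smult_r_minus)
    show "y \<oplus>\<^bsub>M\<^esub> z \<in> ?K" if "y \<in> ?K" "z \<in> ?K" for y z
      using that Ic submoduleE(5)[OF H] by (auto simp: smult_r_distr)
    show "c \<odot>\<^bsub>M\<^esub> y \<in> ?K" if c: "c \<in> carrier R" and y: "y \<in> ?K" for c y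
    proof -
      have "a \<odot>\<^bsub>M\<^esub> (c \<odot>\<^bsub>M\<^esub> y) = c \<odot>\<^bsub>M\<^esub> (a \<odot>\<^bsub>M\<^esub> y)" if "a \<in> I" for a
        using that c y Ic by (metis (no_types, lifting) R.m_comm mem_Collect_eq smult_assoc1 subsetD)
      then show ?thesis using c y submoduleE(4)[OF H] by auto
    qed
  qed auto
  have "mod_ideal_prod R M J N \<subseteq> ?K"
  proof (rule mod_ideal_prod_least[OF K])
    fix b x assume b: "b \<in> J" and x: "x \<in> N"
    have "a \<odot>\<^bsub>M\<^esub> (b \<odot>\<^bsub>M\<^esub> x) \<in> ?H" if a: "a \<in> I" for a
    proof -
      have "a \<odot>\<^bsub>M\<^esub> (b \<odot>\<^bsub>M\<^esub> x) = (a \<otimes> b) \<odot>\<^bsub>M\<^esub> x"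
        using a b x Ic Jc N by (intro smult_assoc1[symmetric]) auto
      moreover have "a \<otimes> b \<in> ideal_prod R I J" using a b by (rule ideal_prod.prod)
      ultimately show ?thesis using x by (simp add: mod_ideal_prod_mem)
    qed
    then show "b \<odot>\<^bsub>M\<^esub> x \<in> ?K" using b x Jc N by auto
  qed
  then show ?thesis by (intro mod_ideal_prod_least[OF H]) auto
qed

lemma (in plain_module) mod_ideal_prod_assoc:
  "ideal I R \<Longrightarrow> ideal J R \<Longrightarrow> N \<subseteq> carrier M \<Longrightarrow>
   mod_ideal_prod R M (ideal_prod R I J) N = mod_ideal_prod R M I (mod_ideal_prod R M J N)"
  by (intro equalityI mod_ideal_prod_ideal_prod_subset mod_ideal_prod_subset_ideal_prod)

lemma (in cring) ideal_power_0 [simp]: "ideal_power R I 0 = carrier R"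
  by (simp add: ideal_power_def ideals_set_def)

lemma (in cring) ideal_power_Suc: "ideal_power R I (Suc k) = ideal_prod R (ideal_power R I k) I"
  by (simp add: ideal_power_def ideals_set_def)

lemma (in cring) ideal_power_is_ideal: "ideal I R \<Longrightarrow> ideal (ideal_power R I k) R"
  by (induct k) (auto simp: ideal_power_Suc oneideal intro: ideal_prod_is_ideal)

lemma (in cring) ideal_power_subset_carrier: "ideal I R \<Longrightarrow> ideal_power R I k \<subseteq> carrier R"
  using ideal.Icarr[OF ideal_power_is_ideal] by blast

lemma (in cring) ideal_power_antimono:
  assumes "ideal I R" and "k \<le> l"
  shows "ideal_power R I l \<subseteq> ideal_power R I k"
  using assms(2)
proof (induct l)
  case (Suc l)
  have "ideal_power R I (Suc l) \<subseteq> ideal_power R I l"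
    using ideal_prod_inter[OF ideal_power_is_ideal[OF assms(1)] assms(1)] by (auto simp: ideal_power_Suc)
  with Suc show ?case by (cases "k = Suc l") auto
qed simp

lemma (in plain_module) subset_mod_ideal_prod_power:
  assumes I: "ideal I R" and N: "N \<subseteq> carrier M" and NIN: "N \<subseteq> mod_ideal_prod R M I N"
  shows "N \<subseteq> mod_ideal_prod R M (ideal_power R I j) N"
proof (induct j)
  case 0
  show ?case using subset_mod_ideal_prod_carrier[OF N] by simp
next
  case (Suc j)
  have Ic: "I \<subseteq> carrier R" using ideal.Icarr[OF I] by blast
  have Ijc: "ideal_power R I j \<subseteq> carrier R" by (rule ideal_power_subset_carrier[OF I])
  note Suc
  also have "mod_ideal_prod R M (ideal_power R I j) N
      \<subseteq> mod_ideal_prod R M (ideal_power R I j) (mod_ideal_prod R M I N)"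
    by (rule mod_ideal_prod_mono[OF Ijc _ order.refl NIN])
      (rule mod_ideal_prod_subset_carrier[OF Ic N])
  also have "\<dots> = mod_ideal_prod R M (ideal_power R I (Suc j)) N"
    by (simp add: ideal_power_Suc mod_ideal_prod_assoc[OF ideal_power_is_ideal[OF I] I N])
  finally show ?case .
qed

section \<open>The module of homomorphisms\<close>

lemma Hom_mod_carrier:
  "f \<in> carrier (Hom_mod R A L) \<longleftrightarrow> f \<in> carrier A \<rightarrow> carrier L \<and> f \<in> extensional (carrier A) \<and>
      (\<forall>x\<in>carrier A. \<forall>y\<in>carrier A. f (x \<oplus>\<^bsub>A\<^esub> y) = f x \<oplus>\<^bsub>L\<^esub> f y) \<and>
      (\<forall>a\<in>carrier R. \<forall>x\<in>carrier A. f (a \<odot>\<^bsub>A\<^esub> x) = a \<odot>\<^bsub>L\<^esub> f x)"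
  by (simp add: Hom_mod_def)

lemma Hom_mod_zero: "\<zero>\<^bsub>Hom_mod R A L\<^esub> = (\<lambda>x\<in>carrier A. \<zero>\<^bsub>L\<^esub>)"
  by (simp add: Hom_mod_def)

lemma Hom_mod_add: "f \<oplus>\<^bsub>Hom_mod R A L\<^esub> g = (\<lambda>x\<in>carrier A. f x \<oplus>\<^bsub>L\<^esub> g x)"
  by (simp add: Hom_mod_def)

lemma Hom_mod_smult: "a \<odot>\<^bsub>Hom_mod R A L\<^esub> f = (\<lambda>x\<in>carrier A. a \<odot>\<^bsub>L\<^esub> f x)"
  by (simp add: Hom_mod_def)

locale two_modules = A: plain_module R A + L: plain_module R L
  for R :: "('a, 'c) ring_scheme" (structure) and A :: "('a, 'd) module" and L :: "('a, 'b) module"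
begin

abbreviation H :: "('a, 'd \<Rightarrow> 'b) module" where "H \<equiv> Hom_mod R A L"

lemma hom_closed: "f \<in> carrier H \<Longrightarrow> x \<in> carrier A \<Longrightarrow> f x \<in> carrier L"
  by (auto simp: Hom_mod_carrier)

lemma hom_add: "f \<in> carrier H \<Longrightarrow> x \<in> carrier A \<Longrightarrow> y \<in> carrier A \<Longrightarrow>
    f (x \<oplus>\<^bsub>A\<^esub> y) = f x \<oplus>\<^bsub>L\<^esub> f y"
  by (auto simp: Hom_mod_carrier)

lemma hom_smult: "f \<in> carrier H \<Longrightarrow> a \<in> carrier R \<Longrightarrow> x \<in> carrier A \<Longrightarrow>
    f (a \<odot>\<^bsub>A\<^esub> x) = a \<odot>\<^bsub>L\<^esub> f x"
  by (auto simp: Hom_mod_carrier)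

lemma hom_zero: "f \<in> carrier H \<Longrightarrow> f \<zero>\<^bsub>A\<^esub> = \<zero>\<^bsub>L\<^esub>"
  using hom_smult[of f \<zero> "\<zero>\<^bsub>A\<^esub>"] hom_closed by simp

lemma hom_neg: "f \<in> carrier H \<Longrightarrow> x \<in> carrier A \<Longrightarrow> f (\<ominus>\<^bsub>A\<^esub> x) = \<ominus>\<^bsub>L\<^esub> f x"
  using hom_smult[of f "\<ominus> \<one>" x] hom_closed by (simp add: A.smult_l_minus L.smult_l_minus)

lemma hom_eqI: "f \<in> carrier H \<Longrightarrow> g \<in> carrier H \<Longrightarrow> (\<And>x. x \<in> carrier A \<Longrightarrow> f x = g x) \<Longrightarrow> f = g"
  by (auto simp: Hom_mod_carrier intro: extensionalityI)

lemma Hom_mod_add_closed: "f \<in> carrier H \<Longrightarrow> g \<in> carrier H \<Longrightarrow> f \<oplus>\<^bsub>H\<^esub> g \<in> carrier H"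
  unfolding Hom_mod_add
  by (subst Hom_mod_carrier) (auto simp: hom_closed hom_add hom_smult L.smult_r_distr L.a_ac)

lemma Hom_mod_smult_closed: "a \<in> carrier R \<Longrightarrow> f \<in> carrier H \<Longrightarrow> a \<odot>\<^bsub>H\<^esub> f \<in> carrier H"
  unfolding Hom_mod_smult
  by (subst Hom_mod_carrier)
    (auto simp: hom_closed hom_add hom_smult L.smult_r_distr A.R.m_comm simp flip: L.smult_assoc1)

lemma Hom_mod_zero_closed: "\<zero>\<^bsub>H\<^esub> \<in> carrier H"
  unfolding Hom_mod_zero by (subst Hom_mod_carrier) auto

lemma Hom_mod_uminus_closed: "f \<in> carrier H \<Longrightarrow> (\<lambda>x\<in>carrier A. \<ominus>\<^bsub>L\<^esub> f x) \<in> carrier H"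
  by (subst Hom_mod_carrier) (auto simp: hom_closed hom_add hom_smult L.smult_r_minus L.minus_add)

lemma Hom_mod_l_neg:
  "f \<in> carrier H \<Longrightarrow> (\<lambda>x\<in>carrier A. \<ominus>\<^bsub>L\<^esub> f x) \<oplus>\<^bsub>H\<^esub> f = \<zero>\<^bsub>H\<^esub>"
  by (intro hom_eqI Hom_mod_add_closed Hom_mod_zero_closed Hom_mod_uminus_closed)
    (auto simp: Hom_mod_add Hom_mod_zero hom_closed L.l_neg)

lemma abelian_group_Hom_mod: "abelian_group H"
proof (rule abelian_groupI)
  show "x \<oplus>\<^bsub>H\<^esub> y \<oplus>\<^bsub>H\<^esub> z = x \<oplus>\<^bsub>H\<^esub> (y \<oplus>\<^bsub>H\<^esub> z)"
    if "x \<in> carrier H" "y \<in> carrier H" "z \<in> carrier H" for x y z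
    using that by (intro hom_eqI Hom_mod_add_closed) (auto simp: Hom_mod_add hom_closed L.a_ac)
  show "x \<oplus>\<^bsub>H\<^esub> y = y \<oplus>\<^bsub>H\<^esub> x" if "x \<in> carrier H" "y \<in> carrier H" for x y
    using that by (intro hom_eqI Hom_mod_add_closed) (auto simp: Hom_mod_add hom_closed L.a_ac)
  show "\<zero>\<^bsub>H\<^esub> \<oplus>\<^bsub>H\<^esub> x = x" if "x \<in> carrier H" for x
    using that by (intro hom_eqI Hom_mod_add_closed Hom_mod_zero_closed)
      (auto simp: Hom_mod_add Hom_mod_zero hom_closed)
  show "\<exists>y\<in>carrier H. y \<oplus>\<^bsub>H\<^esub> x = \<zero>\<^bsub>H\<^esub>" if "x \<in> carrier H" for x
    using that Hom_mod_uminus_closed Hom_mod_l_neg by blast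
qed (auto intro: Hom_mod_add_closed Hom_mod_zero_closed)

lemma module_Hom_mod: "module R H"
proof (rule moduleI)
  show "(a \<oplus> b) \<odot>\<^bsub>H\<^esub> x = a \<odot>\<^bsub>H\<^esub> x \<oplus>\<^bsub>H\<^esub> b \<odot>\<^bsub>H\<^esub> x"
    if "a \<in> carrier R" "b \<in> carrier R" "x \<in> carrier H" for a b x
    using that by (intro hom_eqI Hom_mod_add_closed Hom_mod_smult_closed A.R.a_closed)
      (auto simp: Hom_mod_add Hom_mod_smult hom_closed L.smult_l_distr)
  show "a \<odot>\<^bsub>H\<^esub> (x \<oplus>\<^bsub>H\<^esub> y) = a \<odot>\<^bsub>H\<^esub> x \<oplus>\<^bsub>H\<^esub> a \<odot>\<^bsub>H\<^esub> y"
    if "a \<in> carrier R" "x \<in> carrier H" "y \<in> carrier H" for a x y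
    using that by (intro hom_eqI Hom_mod_add_closed Hom_mod_smult_closed)
      (auto simp: Hom_mod_add Hom_mod_smult hom_closed L.smult_r_distr)
  show "(a \<otimes> b) \<odot>\<^bsub>H\<^esub> x = a \<odot>\<^bsub>H\<^esub> (b \<odot>\<^bsub>H\<^esub> x)"
    if "a \<in> carrier R" "b \<in> carrier R" "x \<in> carrier H" for a b x
    using that by (intro hom_eqI Hom_mod_smult_closed A.R.m_closed)
      (auto simp: Hom_mod_smult hom_closed L.smult_assoc1)
  show "\<one> \<odot>\<^bsub>H\<^esub> x = x" if "x \<in> carrier H" for x
    using that by (intro hom_eqI Hom_mod_smult_closed A.R.one_closed) (auto simp: Hom_mod_smult hom_closed)
qed (auto intro: A.is_cring abelian_group_Hom_mod Hom_mod_smult_closed)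

lemma Hom_mod_minus_apply: "f \<in> carrier H \<Longrightarrow> x \<in> carrier A \<Longrightarrow> (\<ominus>\<^bsub>H\<^esub> f) x = \<ominus>\<^bsub>L\<^esub> f x"
proof -
  assume f: "f \<in> carrier H" and x: "x \<in> carrier A"
  interpret abelian_group H by (rule abelian_group_Hom_mod)
  have "\<ominus>\<^bsub>H\<^esub> f = (\<lambda>x\<in>carrier A. \<ominus>\<^bsub>L\<^esub> f x)"
    using f Hom_mod_l_neg Hom_mod_uminus_closed by (intro minus_equality) auto
  then show ?thesis using x by simp
qed

end

sublocale two_modules \<subseteq> Hom: plain_module R "Hom_mod R A L"
  by (rule plain_module.intro[OF module_Hom_mod])

section \<open>Local rings, Nakayama, and torsion of artinian modules\<close>

lemma (in cring) ideal_subset_maximalideal: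
  assumes I: "ideal I R" and one: "\<one> \<notin> I"
  obtains M where "maximalideal M R" and "I \<subseteq> M"
proof -
  define S where "S = {J. ideal J R \<and> I \<subseteq> J \<and> \<one> \<notin> J}"
  have "\<exists>M\<in>S. \<forall>Y. Y \<in> S \<longrightarrow> M \<subseteq> Y \<longrightarrow> Y = M"
  proof (rule subset_Zorn[simplified Ball_def, rule_format])
    fix C assume C: "subset.chain S C"
    show "\<exists>U\<in>S. \<forall>Z. Z \<in> C \<longrightarrow> Z \<subseteq> U"
    proof (cases "C = {}")
      case True
      then show ?thesis using I one by (auto simp: S_def)
    next
      case False
      have "subset.chain {J. ideal J R} C" using C unfolding pred_on.chain_def S_def by auto
      from chain_Union_is_ideal[OF this] False have "ideal (\<Union>C) R" by simp
      moreover have "I \<subseteq> \<Union>C" "\<one> \<notin> \<Union>C"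
        using C False unfolding pred_on.chain_def S_def by blast+
      ultimately show ?thesis by (auto simp: S_def)
    qed
  qed
  then obtain M where M: "ideal M R" "I \<subseteq> M" "\<one> \<notin> M"
    and maxM: "\<And>Y. Y \<in> S \<Longrightarrow> M \<subseteq> Y \<Longrightarrow> Y = M"
    by (auto simp: S_def)
  have "maximalideal M R"
  proof (rule maximalidealI)
    show "carrier R \<noteq> M" using M(3) by auto
    fix J assume J: "ideal J R" "M \<subseteq> J" "J \<subseteq> carrier R"
    show "J = M \<or> J = carrier R"
      using ideal.one_imp_carrier[OF J(1)] maxM[of J] J M by (cases "\<one> \<in> J") (auto simp: S_def)
  qed (rule M(1))
  with M(2) show ?thesis using that by blast
qed

locale local_ring = cring R for R :: "('a, 'c) ring_scheme" (structure) +
  fixes m :: "'a set"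
  assumes maximal_ideal: "maximalideal m R"
    and unique_maximal_ideal: "\<And>I. maximalideal I R \<Longrightarrow> I = m"
begin

lemma m_ideal: "ideal m R"
  using maximal_ideal by (rule maximalideal.axioms(1))

lemma m_subset_carrier: "m \<subseteq> carrier R"
  using ideal.Icarr[OF m_ideal] by auto

lemma one_minus_Units:
  assumes c: "c \<in> m" shows "\<one> \<ominus> c \<in> Units R"
proof (rule ccontr)
  assume nu: "\<one> \<ominus> c \<notin> Units R"
  have cc: "c \<in> carrier R" using c m_subset_carrier by auto
  let ?u = "\<one> \<ominus> c"
  have uc: "?u \<in> carrier R" using cc by simp
  have "\<one> \<notin> PIdl ?u"
  proof
    assume "\<one> \<in> PIdl ?u"
    then obtain y where "y \<in> carrier R" "\<one> = y \<otimes> ?u" unfolding cgenideal_def by auto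
    then have "?u \<in> Units R" using uc unfolding Units_def by (auto simp: m_comm intro!: bexI[of _ y])
    then show False using nu by simp
  qed
  then obtain M where "maximalideal M R" "PIdl ?u \<subseteq> M"
    using ideal_subset_maximalideal[OF cgenideal_ideal[OF uc]] by blast
  then have "?u \<in> m" using unique_maximal_ideal cgenideal_self[OF uc] by blast
  then have "?u \<oplus> c \<in> m" using c by (rule additive_subgroup.a_closed[OF ideal.axioms(1)[OF m_ideal]])
  moreover have "?u \<oplus> c = \<one>" using cc by (simp add: minus_eq a_assoc l_neg)
  ultimately show False
    using ideal.one_imp_carrier[OF m_ideal] maximalideal.I_notcarr[OF maximal_ideal] by auto
qed

end

lemma (in cring) Idl_insertE:
  assumes h: "h \<in> carrier R" and G: "G \<subseteq> carrier R" and a: "a \<in> Idl (insert h G)"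
  obtains r a' where "r \<in> carrier R" and "a' \<in> Idl G" and "a = r \<otimes> h \<oplus> a'"
proof -
  have I1: "ideal (PIdl h) R" by (rule cgenideal_ideal[OF h])
  have I2: "ideal (Idl G) R" by (rule genideal_ideal[OF G])
  have "h \<in> PIdl h <+>\<^bsub>R\<^esub> Idl G"
    using cgenideal_self[OF h] additive_subgroup.zero_closed[OF ideal.axioms(1)[OF I2]] h
    unfolding set_add_def' by force
  moreover have "G \<subseteq> PIdl h <+>\<^bsub>R\<^esub> Idl G"
    using genideal_self[OF G] additive_subgroup.zero_closed[OF ideal.axioms(1)[OF I1]] G
    unfolding set_add_def' by force
  ultimately have "Idl (insert h G) \<subseteq> PIdl h <+>\<^bsub>R\<^esub> Idl G"
    by (intro genideal_minimal[OF add_ideals[OF I1 I2]]) auto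
  with a that show ?thesis unfolding set_add_def' cgenideal_def by auto
qed

lemma (in cring) ideal_prod_Idl_insertE:
  assumes I: "ideal I R" and h: "h \<in> carrier R" and G: "G \<subseteq> carrier R"
    and b: "b \<in> ideal_prod R I (Idl (insert h G))"
  obtains c b' where "c \<in> I" and "b' \<in> ideal_prod R I (Idl G)" and "b = c \<otimes> h \<oplus> b'"
proof -
  let ?P' = "ideal_prod R I (Idl G)"
  have IP': "ideal ?P' R" by (rule ideal_prod_is_ideal[OF I genideal_ideal[OF G]])
  have Ic: "I \<subseteq> carrier R" using ideal.Icarr[OF I] by auto
  have "\<exists>c b'. c \<in> I \<and> b' \<in> ?P' \<and> b = c \<otimes> h \<oplus> b'"
    using b
  proof (induct b rule: ideal_prod.induct)
    case (prod i j)
    obtain r a' where ra: "r \<in> carrier R" "a' \<in> Idl G" "j = r \<otimes> h \<oplus> a'"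
      using Idl_insertE[OF h G prod(2)] .
    have ic: "i \<in> carrier R" using prod(1) Ic by auto
    have a'c: "a' \<in> carrier R" using ideal.Icarr[OF genideal_ideal[OF G] ra(2)] .
    have "i \<otimes> j = (i \<otimes> r) \<otimes> h \<oplus> i \<otimes> a'"
      using ra ic a'c h by (simp add: r_distr m_assoc)
    moreover have "i \<otimes> r \<in> I" using ideal.I_r_closed[OF I prod(1) ra(1)] .
    moreover have "i \<otimes> a' \<in> ?P'" using prod(1) ra(2) by (rule ideal_prod.prod)
    ultimately show ?case by blast
  next
    case (sum s1 s2)
    obtain c1 b1 where 1: "c1 \<in> I" "b1 \<in> ?P'" "s1 = c1 \<otimes> h \<oplus> b1" using sum(2) by auto
    obtain c2 b2 where 2: "c2 \<in> I" "b2 \<in> ?P'" "s2 = c2 \<otimes> h \<oplus> b2" using sum(4) by auto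
    have "c1 \<in> carrier R" "c2 \<in> carrier R" "b1 \<in> carrier R" "b2 \<in> carrier R"
      using 1 2 Ic ideal.Icarr[OF IP'] by auto
    then have "s1 \<oplus> s2 = (c1 \<oplus> c2) \<otimes> h \<oplus> (b1 \<oplus> b2)"
      using 1 2 h by (simp add: l_distr a_ac)
    moreover have "c1 \<oplus> c2 \<in> I"
      using 1(1) 2(1) by (rule additive_subgroup.a_closed[OF ideal.axioms(1)[OF I]])
    moreover have "b1 \<oplus> b2 \<in> ?P'"
      using 1(2) 2(2) by (rule additive_subgroup.a_closed[OF ideal.axioms(1)[OF IP']])
    ultimately show ?case by blast
  qed
  with that show ?thesis by blast
qed

locale local_module = local_ring R m + plain_module R M
  for R :: "('a, 'c) ring_scheme" (structure) and m and M :: "('a, 'b) module"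
begin

lemma eq_smult_inv_one_minus:
  assumes c: "c \<in> m" and y: "y \<in> carrier M" and z: "z \<in> carrier M"
    and eq: "y = c \<odot>\<^bsub>M\<^esub> y \<oplus>\<^bsub>M\<^esub> z"
  shows "y = inv (\<one> \<ominus> c) \<odot>\<^bsub>M\<^esub> z"
proof -
  have cc: "c \<in> carrier R" using c m_subset_carrier by auto
  have U: "\<one> \<ominus> c \<in> Units R" by (rule one_minus_Units[OF c])
  have "(\<one> \<ominus> c) \<odot>\<^bsub>M\<^esub> y = y \<ominus>\<^bsub>M\<^esub> c \<odot>\<^bsub>M\<^esub> y"
    using cc y by (simp add: a_minus_def smult_l_distr smult_l_minus M.minus_eq)
  also have "\<dots> = z"
    using cc y z by (subst (1) eq) (simp add: M.minus_eq M.a_ac M.r_neg M.l_neg)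
  finally have z_eq: "z = (\<one> \<ominus> c) \<odot>\<^bsub>M\<^esub> y" ..
  have "inv (\<one> \<ominus> c) \<odot>\<^bsub>M\<^esub> z = (inv (\<one> \<ominus> c) \<otimes> (\<one> \<ominus> c)) \<odot>\<^bsub>M\<^esub> y"
    unfolding z_eq using U y by (intro smult_assoc1[symmetric]) auto
  then show ?thesis using U y by simp
qed

lemma nakayama_cyclic_insert:
  assumes h: "h \<in> carrier R" and G: "G \<subseteq> carrier R" and x: "x \<in> carrier M"
    and hyp: "\<forall>a\<in>Idl (insert h G). \<exists>b\<in>ideal_prod R m (Idl (insert h G)). a \<odot>\<^bsub>M\<^esub> x = b \<odot>\<^bsub>M\<^esub> x"
  obtains w where "w \<in> ideal_prod R m (Idl G)" and "h \<odot>\<^bsub>M\<^esub> x = w \<odot>\<^bsub>M\<^esub> x"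
    and "\<forall>a\<in>Idl G. \<exists>b\<in>ideal_prod R m (Idl G). a \<odot>\<^bsub>M\<^esub> x = b \<odot>\<^bsub>M\<^esub> x"
proof -
  have hG: "insert h G \<subseteq> carrier R" using h G by simp
  let ?P = "ideal_prod R m (Idl (insert h G))" and ?P' = "ideal_prod R m (Idl G)"
  have IP': "ideal ?P' R" by (rule ideal_prod_is_ideal[OF m_ideal genideal_ideal[OF G]])
  have P'c: "?P' \<subseteq> carrier R" using ideal.Icarr[OF IP'] by auto
  have split: "\<exists>c b'. c \<in> m \<and> b' \<in> ?P' \<and> a \<odot>\<^bsub>M\<^esub> x = c \<odot>\<^bsub>M\<^esub> (h \<odot>\<^bsub>M\<^esub> x) \<oplus>\<^bsub>M\<^esub> b' \<odot>\<^bsub>M\<^esub> x"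
    if a: "a \<in> Idl (insert h G)" for a
  proof -
    obtain b where b: "b \<in> ?P" "a \<odot>\<^bsub>M\<^esub> x = b \<odot>\<^bsub>M\<^esub> x" using hyp a by blast
    obtain c b' where cb: "c \<in> m" "b' \<in> ?P'" "b = c \<otimes> h \<oplus> b'"
      using ideal_prod_Idl_insertE[OF m_ideal h G b(1)] .
    have "c \<in> carrier R" "b' \<in> carrier R" using cb m_subset_carrier P'c by auto
    then show ?thesis using b(2) cb h x by (auto simp: smult_l_distr smult_assoc1)
  qed
  text \<open>Since \<open>\<one> \<ominus> c\<close> is a unit for \<open>c \<in> m\<close>, the element \<open>h \<odot> x\<close> lies in \<open>?P' \<odot> x\<close>.\<close>
  obtain w where w: "w \<in> ?P'" and hxw: "h \<odot>\<^bsub>M\<^esub> x = w \<odot>\<^bsub>M\<^esub> x"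
  proof -
    obtain c b' where cb: "c \<in> m" "b' \<in> ?P'"
      and eq: "h \<odot>\<^bsub>M\<^esub> x = c \<odot>\<^bsub>M\<^esub> (h \<odot>\<^bsub>M\<^esub> x) \<oplus>\<^bsub>M\<^esub> b' \<odot>\<^bsub>M\<^esub> x"
      using split genideal_self[OF hG] by blast
    have U: "inv (\<one> \<ominus> c) \<in> carrier R" using one_minus_Units[OF cb(1)] by simp
    have b'c: "b' \<in> carrier R" using cb(2) P'c by auto
    show ?thesis
    proof
      show "inv (\<one> \<ominus> c) \<otimes> b' \<in> ?P'" by (rule ideal.I_l_closed[OF IP' cb(2) U])
      show "h \<odot>\<^bsub>M\<^esub> x = (inv (\<one> \<ominus> c) \<otimes> b') \<odot>\<^bsub>M\<^esub> x"
        using eq_smult_inv_one_minus[OF cb(1) _ _ eq] h x U b'c by (simp add: smult_assoc1)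
    qed
  qed
  have wc: "w \<in> carrier R" using w P'c by auto
  have "\<forall>a\<in>Idl G. \<exists>b\<in>?P'. a \<odot>\<^bsub>M\<^esub> x = b \<odot>\<^bsub>M\<^esub> x"
  proof
    fix a assume "a \<in> Idl G"
    then have "a \<in> Idl (insert h G)" using subset_Idl_subset[OF hG] by blast
    then obtain c b' where cb: "c \<in> m" "b' \<in> ?P'"
      and eq: "a \<odot>\<^bsub>M\<^esub> x = c \<odot>\<^bsub>M\<^esub> (h \<odot>\<^bsub>M\<^esub> x) \<oplus>\<^bsub>M\<^esub> b' \<odot>\<^bsub>M\<^esub> x"
      using split by blast
    have cc: "c \<in> carrier R" and b'c: "b' \<in> carrier R" using cb m_subset_carrier P'c by auto
    have "a \<odot>\<^bsub>M\<^esub> x = (c \<otimes> w \<oplus> b') \<odot>\<^bsub>M\<^esub> x"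
      using eq cc wc b'c x unfolding hxw by (simp add: smult_l_distr smult_assoc1)
    moreover have "c \<otimes> w \<oplus> b' \<in> ?P'"
      using ideal.I_l_closed[OF IP' w cc] cb(2) by (rule additive_subgroup.a_closed[OF ideal.axioms(1)[OF IP']])
    ultimately show "\<exists>b\<in>?P'. a \<odot>\<^bsub>M\<^esub> x = b \<odot>\<^bsub>M\<^esub> x" by blast
  qed
  with that w hxw show ?thesis by blast
qed

lemma nakayama_cyclic:
  assumes "finite G" and "G \<subseteq> carrier R" and x: "x \<in> carrier M"
    and "\<forall>a\<in>Idl G. \<exists>b\<in>ideal_prod R m (Idl G). a \<odot>\<^bsub>M\<^esub> x = b \<odot>\<^bsub>M\<^esub> x"
  shows "\<forall>a\<in>Idl G. a \<odot>\<^bsub>M\<^esub> x = \<zero>\<^bsub>M\<^esub>"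
  using assms(1,2,4)
proof (induct G rule: finite_induct)
  case empty
  have "Idl {} = {\<zero>}"
    using genideal_minimal[OF zeroideal] additive_subgroup.zero_closed[OF ideal.axioms(1)[OF genideal_ideal]]
    by blast
  then show ?case using x by simp
next
  case (insert h G)
  have h: "h \<in> carrier R" and G: "G \<subseteq> carrier R" using insert.prems(1) by auto
  obtain w where w: "w \<in> ideal_prod R m (Idl G)" and hxw: "h \<odot>\<^bsub>M\<^esub> x = w \<odot>\<^bsub>M\<^esub> x"
    and "\<forall>a\<in>Idl G. \<exists>b\<in>ideal_prod R m (Idl G). a \<odot>\<^bsub>M\<^esub> x = b \<odot>\<^bsub>M\<^esub> x"
    using nakayama_cyclic_insert[OF h G x insert.prems(2)] .
  then have IH: "\<forall>a\<in>Idl G. a \<odot>\<^bsub>M\<^esub> x = \<zero>\<^bsub>M\<^esub>" using insert.hyps(3)[OF G] by blast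
  have hx: "h \<odot>\<^bsub>M\<^esub> x = \<zero>\<^bsub>M\<^esub>"
    using hxw IH w ideal_prod_inter[OF m_ideal genideal_ideal[OF G]] by auto
  show ?case
  proof
    fix a assume "a \<in> Idl (insert h G)"
    then obtain r a' where ra: "r \<in> carrier R" "a' \<in> Idl G" "a = r \<otimes> h \<oplus> a'"
      using Idl_insertE[OF h G] by blast
    have "a' \<in> carrier R" using ideal.Icarr[OF genideal_ideal[OF G] ra(2)] .
    then have "a \<odot>\<^bsub>M\<^esub> x = r \<odot>\<^bsub>M\<^esub> (h \<odot>\<^bsub>M\<^esub> x) \<oplus>\<^bsub>M\<^esub> a' \<odot>\<^bsub>M\<^esub> x"
      using ra h x by (simp add: smult_l_distr smult_assoc1)
    then show "a \<odot>\<^bsub>M\<^esub> x = \<zero>\<^bsub>M\<^esub>" using hx IH ra(1,2) by simp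
  qed
qed

lemma submodule_ideal_smult:
  assumes I: "ideal I R" and x: "x \<in> carrier M"
  shows "submodule {a \<odot>\<^bsub>M\<^esub> x | a. a \<in> I} R M" (is "submodule ?C R M")
proof (rule submoduleI)
  interpret I: ideal I R by (rule I)
  have Ic: "a \<in> I \<Longrightarrow> a \<in> carrier R" for a by (rule I.Icarr)
  show "?C \<subseteq> carrier M" using Ic x by auto
  have "\<zero>\<^bsub>M\<^esub> = \<zero> \<odot>\<^bsub>M\<^esub> x" using x by simp
  then show "\<zero>\<^bsub>M\<^esub> \<in> ?C" using I.zero_closed by blast
  fix y z assume "y \<in> ?C"
  then obtain a where a: "a \<in> I" "y = a \<odot>\<^bsub>M\<^esub> x" by blast
  have "\<ominus>\<^bsub>M\<^esub> y = (\<ominus> a) \<odot>\<^bsub>M\<^esub> x" using a Ic x by (simp add: smult_l_minus)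
  then show "\<ominus>\<^bsub>M\<^esub> y \<in> ?C" using I.a_inv_closed[OF a(1)] by blast
  show "r \<odot>\<^bsub>M\<^esub> y \<in> ?C" if r: "r \<in> carrier R" for r
  proof -
    have "r \<odot>\<^bsub>M\<^esub> y = (r \<otimes> a) \<odot>\<^bsub>M\<^esub> x" using a Ic r x by (simp add: smult_assoc1)
    then show ?thesis using I.I_l_closed[OF a(1) r] by blast
  qed
  assume "z \<in> ?C"
  then obtain b where b: "b \<in> I" "z = b \<odot>\<^bsub>M\<^esub> x" by blast
  have "y \<oplus>\<^bsub>M\<^esub> z = (a \<oplus> b) \<odot>\<^bsub>M\<^esub> x" using a b Ic x by (simp add: smult_l_distr)
  then show "y \<oplus>\<^bsub>M\<^esub> z \<in> ?C" using I.a_closed[OF a(1) b(1)] by blast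
qed

lemma Gamma_eq_carrier:
  assumes noeth: "noetherian_ring R" and art: "artinian_module R M"
  shows "Gamma R m M = carrier M"
proof (intro equalityI subsetI)
  fix x assume x: "x \<in> carrier M"
  define C where "C k = {a \<odot>\<^bsub>M\<^esub> x | a. a \<in> ideal_power R m k}" for k
  have "\<exists>k. C (Suc k) = C k"
  proof (rule ccontr)
    assume "\<nexists>k. C (Suc k) = C k"
    moreover have "C (Suc k) \<subseteq> C k" for k
      using ideal_power_antimono[OF m_ideal le_SucI[OF order.refl]] unfolding C_def by blast
    ultimately have "\<forall>i. C (Suc i) \<subset> C i" by auto
    moreover have "\<forall>i. submodule (C i) R M"
      unfolding C_def using submodule_ideal_smult[OF ideal_power_is_ideal[OF m_ideal] x] by blast
    ultimately show False using art unfolding artinian_module_def by blast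
  qed
  then obtain k where k: "C (Suc k) = C k" ..
  obtain G where G: "G \<subseteq> carrier R" "finite G" "ideal_power R m k = Idl G"
    using noetherian_ring.finetely_gen[OF noeth ideal_power_is_ideal[OF m_ideal]] by blast
  have m_Suc: "ideal_power R m (Suc k) = ideal_prod R m (Idl G)"
    using ideal_prod_commute[OF ideal_power_is_ideal[OF m_ideal] m_ideal, of k] G(3)
    by (simp add: ideal_power_Suc)
  have "\<exists>b\<in>ideal_prod R m (Idl G). a \<odot>\<^bsub>M\<^esub> x = b \<odot>\<^bsub>M\<^esub> x" if "a \<in> Idl G" for a
  proof -
    have "a \<odot>\<^bsub>M\<^esub> x \<in> C (Suc k)" unfolding k unfolding C_def using that G(3) by blast
    then show ?thesis unfolding C_def m_Suc by blast
  qed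
  then have "\<forall>a\<in>ideal_power R m k. a \<odot>\<^bsub>M\<^esub> x = \<zero>\<^bsub>M\<^esub>"
    using nakayama_cyclic[OF G(2,1) x] G(3) by simp
  then show "x \<in> Gamma R m M" unfolding Gamma_def using x by blast
qed (simp add: Gamma_def)

end

section \<open>Lengths, sums and generators of submodules\<close>

context plain_module
begin

definition intermediate_submodule :: "'b set \<Rightarrow> 'b set \<Rightarrow> 'b set \<Rightarrow> bool" where
  "intermediate_submodule Lo Hi F \<longleftrightarrow> submodule F R M \<and> Lo \<subseteq> F \<and> F \<subseteq> Hi"

lemma subquot_length_ge:
  assumes "\<forall>i\<le>k. intermediate_submodule Lo Hi (F i)" and "\<forall>i<k. F i \<subset> F (Suc i)"
  shows "enat k \<le> subquot_length R M Lo Hi"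
  unfolding subquot_length_def using assms
  by (intro Sup_upper) (auto simp: intermediate_submodule_def)

lemma subquot_length_le:
  assumes "\<And>k F. \<forall>i\<le>k. intermediate_submodule Lo Hi (F i) \<Longrightarrow> \<forall>i<k. F i \<subset> F (Suc i) \<Longrightarrow> enat k \<le> x"
  shows "subquot_length R M Lo Hi \<le> x"
  unfolding subquot_length_def using assms
  by (intro Sup_least) (auto simp: intermediate_submodule_def)

lemma subquot_length_refl: "subquot_length R M Z Z = 0"
proof -
  have "enat k \<le> 0" if "\<forall>i\<le>k. intermediate_submodule Z Z (F i)" "\<forall>i<k. F i \<subset> F (Suc i)" for k F
  proof (cases k)
    case (Suc k')
    then have "F 0 \<subset> F 1" "F 0 = Z" "F 1 = Z"
      using that by (auto simp: intermediate_submodule_def)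
    then show ?thesis by simp
  qed (simp add: zero_enat_def)
  then show ?thesis using subquot_length_le[of Z Z 0] by simp
qed

lemma mod_length_eq_0_iff:
  assumes "submodule N R M"
  shows "mod_length R M N = 0 \<longleftrightarrow> N = {\<zero>\<^bsub>M\<^esub>}"
proof
  assume len: "mod_length R M N = 0"
  show "N = {\<zero>\<^bsub>M\<^esub>}"
  proof (rule ccontr)
    assume ne: "N \<noteq> {\<zero>\<^bsub>M\<^esub>}"
    have zero: "submodule {\<zero>\<^bsub>M\<^esub>} R M" by (rule submoduleI) auto
    have "enat 1 \<le> subquot_length R M {\<zero>\<^bsub>M\<^esub>} N"
      by (rule subquot_length_ge[where F = "\<lambda>i. if i = 0 then {\<zero>\<^bsub>M\<^esub>} else N"])
        (use assms zero ne submodule_zero[OF assms] in \<open>auto simp: intermediate_submodule_def\<close>)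
    then show False using len unfolding mod_length_def by (simp add: zero_enat_def)
  qed
qed (simp add: mod_length_def subquot_length_refl)

lemma strict_subchain:
  assumes "\<forall>i\<le>k. intermediate_submodule Lo Hi (P i)" "\<forall>i<k. P i \<subseteq> P (Suc i)"
  shows "\<exists>F. (\<forall>i\<le>card {i. i < k \<and> P i \<subset> P (Suc i)}. intermediate_submodule Lo Hi (F i)) \<and>
             (\<forall>i<card {i. i < k \<and> P i \<subset> P (Suc i)}. F i \<subset> F (Suc i)) \<and>
             F (card {i. i < k \<and> P i \<subset> P (Suc i)}) = P k"
  using assms
proof (induct k)
  case 0
  then show ?case by (intro exI[of _ "\<lambda>_. P 0"]) auto
next
  case (Suc k)
  define c where "c = card {i. i < k \<and> P i \<subset> P (Suc i)}"
  obtain F where F: "\<forall>i\<le>c. intermediate_submodule Lo Hi (F i)" "\<forall>i<c. F i \<subset> F (Suc i)" "F c = P k"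
    using Suc unfolding c_def by auto
  show ?case
  proof (cases "P k \<subset> P (Suc k)")
    case True
    have "{i. i < Suc k \<and> P i \<subset> P (Suc i)} = insert k {i. i < k \<and> P i \<subset> P (Suc i)}"
      using True by auto
    then have "card {i. i < Suc k \<and> P i \<subset> P (Suc i)} = Suc c" unfolding c_def by simp
    then show ?thesis
      by (intro exI[of _ "F(Suc c := P (Suc k))"])
        (use F True Suc.prems in \<open>auto simp: less_Suc_eq_le le_Suc_eq\<close>)
  next
    case False
    then have "P (Suc k) = P k" using Suc.prems by auto
    moreover have "{i. i < Suc k \<and> P i \<subset> P (Suc i)} = {i. i < k \<and> P i \<subset> P (Suc i)}"
      using False by (auto simp: less_Suc_eq)
    ultimately show ?thesis using F unfolding c_def by auto
  qed
qed

lemma subquot_length_ge_card_strict: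
  assumes "\<forall>i\<le>k. intermediate_submodule Lo Hi (P i)" "\<forall>i<k. P i \<subseteq> P (Suc i)"
  shows "enat (card {i. i < k \<and> P i \<subset> P (Suc i)}) \<le> subquot_length R M Lo Hi"
  using strict_subchain[OF assms] subquot_length_ge by blast

definition submodule_sum :: "'b set \<Rightarrow> 'b set \<Rightarrow> 'b set" where
  "submodule_sum F K = {y \<oplus>\<^bsub>M\<^esub> z | y z. y \<in> F \<and> z \<in> K}"

lemma submodule_sum_submodule:
  assumes F: "submodule F R M" and K: "submodule K R M"
  shows "submodule (submodule_sum F K) R M"
proof (rule submoduleI)
  have Fc: "F \<subseteq> carrier M" and Kc: "K \<subseteq> carrier M" using submoduleE(1) F K by auto
  show "submodule_sum F K \<subseteq> carrier M" unfolding submodule_sum_def using Fc Kc by auto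
  have "\<zero>\<^bsub>M\<^esub> \<oplus>\<^bsub>M\<^esub> \<zero>\<^bsub>M\<^esub> \<in> submodule_sum F K"
    unfolding submodule_sum_def using submodule_zero[OF F] submodule_zero[OF K] by blast
  then show "\<zero>\<^bsub>M\<^esub> \<in> submodule_sum F K" by simp
  fix a b assume "a \<in> submodule_sum F K"
  then obtain y z where yz: "y \<in> F" "z \<in> K" "a = y \<oplus>\<^bsub>M\<^esub> z" unfolding submodule_sum_def by auto
  have yc: "y \<in> carrier M" "z \<in> carrier M" using yz Fc Kc by auto
  have "\<ominus>\<^bsub>M\<^esub> a = \<ominus>\<^bsub>M\<^esub> y \<oplus>\<^bsub>M\<^esub> \<ominus>\<^bsub>M\<^esub> z" using yc by (simp add: yz(3) M.minus_add)
  then show "\<ominus>\<^bsub>M\<^esub> a \<in> submodule_sum F K"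
    unfolding submodule_sum_def using yz submoduleE(3) F K by blast
  show "r \<odot>\<^bsub>M\<^esub> a \<in> submodule_sum F K" if "r \<in> carrier R" for r
  proof -
    have "r \<odot>\<^bsub>M\<^esub> a = r \<odot>\<^bsub>M\<^esub> y \<oplus>\<^bsub>M\<^esub> r \<odot>\<^bsub>M\<^esub> z" using yc that by (simp add: yz(3) smult_r_distr)
    then show ?thesis unfolding submodule_sum_def using yz that submoduleE(4) F K by blast
  qed
  assume "b \<in> submodule_sum F K"
  then obtain y' z' where yz': "y' \<in> F" "z' \<in> K" "b = y' \<oplus>\<^bsub>M\<^esub> z'"
    unfolding submodule_sum_def by auto
  have "y' \<in> carrier M" "z' \<in> carrier M" using yz' Fc Kc by auto
  then have "a \<oplus>\<^bsub>M\<^esub> b = (y \<oplus>\<^bsub>M\<^esub> y') \<oplus>\<^bsub>M\<^esub> (z \<oplus>\<^bsub>M\<^esub> z')"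
    using yc by (simp add: yz(3) yz'(3) M.a_ac)
  then show "a \<oplus>\<^bsub>M\<^esub> b \<in> submodule_sum F K"
    unfolding submodule_sum_def using yz yz' submoduleE(5) F K by blast
qed

lemma submodule_sum_left: "submodule K R M \<Longrightarrow> F \<subseteq> carrier M \<Longrightarrow> F \<subseteq> submodule_sum F K"
  unfolding submodule_sum_def using submodule_zero by force

lemma submodule_sum_right: "submodule F R M \<Longrightarrow> K \<subseteq> carrier M \<Longrightarrow> K \<subseteq> submodule_sum F K"
  unfolding submodule_sum_def using submodule_zero by force

lemma submodule_sum_mono: "F \<subseteq> F' \<Longrightarrow> submodule_sum F K \<subseteq> submodule_sum F' K"
  unfolding submodule_sum_def by blast

lemma submodule_sum_least: "submodule H R M \<Longrightarrow> F \<subseteq> H \<Longrightarrow> K \<subseteq> H \<Longrightarrow> submodule_sum F K \<subseteq> H"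
  unfolding submodule_sum_def using submoduleE(5) by blast

lemma modular_eq:
  assumes F: "submodule F R M" and F': "submodule F' R M" and K: "submodule K R M"
    and FF': "F \<subseteq> F'" and inter: "F \<inter> K = F' \<inter> K" and sum: "submodule_sum F K = submodule_sum F' K"
  shows "F = F'"
proof
  show "F' \<subseteq> F"
  proof
    fix x assume x: "x \<in> F'"
    have F'c: "F' \<subseteq> carrier M" and Kc: "K \<subseteq> carrier M" using submoduleE(1) F' K by auto
    have "x \<in> submodule_sum F K" using submodule_sum_left[OF K F'c] x sum by auto
    then obtain y z where yz: "y \<in> F" "z \<in> K" "x = y \<oplus>\<^bsub>M\<^esub> z" unfolding submodule_sum_def by auto
    have yc: "y \<in> carrier M" and zc: "z \<in> carrier M" using yz FF' F'c Kc by auto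
    have "z = \<ominus>\<^bsub>M\<^esub> y \<oplus>\<^bsub>M\<^esub> x"
      using yc zc by (simp add: yz(3) M.a_assoc[symmetric] M.l_neg)
    moreover have "\<ominus>\<^bsub>M\<^esub> y \<in> F'" using yz(1) FF' submoduleE(3)[OF F'] by auto
    ultimately have "z \<in> F'" using x submoduleE(5)[OF F'] by auto
    then have "z \<in> F" using inter yz(2) by auto
    then show "x \<in> F" using yz submoduleE(5)[OF F] by auto
  qed
qed (rule FF')

lemma subquot_length_triangle:
  assumes Hi: "submodule Hi R M" and K: "submodule K R M" and "Lo \<subseteq> K" and "K \<subseteq> Hi"
  shows "subquot_length R M Lo Hi \<le> subquot_length R M Lo K + subquot_length R M K Hi"
proof (rule subquot_length_le)
  fix k F assume F: "\<forall>i\<le>k. intermediate_submodule Lo Hi (F i)" and st: "\<forall>i<k. F i \<subset> F (Suc i)"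
  define P where "P i = F i \<inter> K" for i
  define Q where "Q i = submodule_sum (F i) K" for i
  have Fs: "submodule (F i) R M" if "i \<le> k" for i using F that unfolding intermediate_submodule_def by auto
  have Kc: "K \<subseteq> carrier M" using submoduleE(1)[OF K] .
  have P: "\<forall>i\<le>k. intermediate_submodule Lo K (P i)"
  proof (intro allI impI)
    fix i assume i: "i \<le> k"
    have "submodule (\<Inter>{F i, K}) R M" by (rule submodule_Inter) (use Fs[OF i] K in auto)
    then show "intermediate_submodule Lo K (P i)"
      using F i assms unfolding intermediate_submodule_def P_def by auto
  qed
  have Q: "\<forall>i\<le>k. intermediate_submodule K Hi (Q i)"
    using submodule_sum_submodule[OF Fs K] submodule_sum_right[OF Fs Kc]
      submodule_sum_least[OF Hi] F assms(4)
    unfolding intermediate_submodule_def Q_def by auto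
  have monoP: "\<forall>i<k. P i \<subseteq> P (Suc i)" and monoQ: "\<forall>i<k. Q i \<subseteq> Q (Suc i)"
    using st unfolding P_def Q_def by (auto intro!: submodule_sum_mono)
  have cover: "{i. i < k} \<subseteq> {i. i < k \<and> P i \<subset> P (Suc i)} \<union> {i. i < k \<and> Q i \<subset> Q (Suc i)}"
  proof
    fix i assume "i \<in> {i. i < k}"
    then have i: "i < k" by simp
    have "submodule (F i) R M" "submodule (F (Suc i)) R M" "F i \<subset> F (Suc i)"
      using Fs st i by auto
    then have "P i \<noteq> P (Suc i) \<or> Q i \<noteq> Q (Suc i)"
      using modular_eq[of "F i" "F (Suc i)", OF _ _ K] unfolding P_def Q_def by blast
    then show "i \<in> {i. i < k \<and> P i \<subset> P (Suc i)} \<union> {i. i < k \<and> Q i \<subset> Q (Suc i)}"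
      using monoP monoQ i by auto
  qed
  have "k \<le> card ({i. i < k \<and> P i \<subset> P (Suc i)} \<union> {i. i < k \<and> Q i \<subset> Q (Suc i)})"
    using card_mono[OF _ cover] by simp
  also have "\<dots> \<le> card {i. i < k \<and> P i \<subset> P (Suc i)} + card {i. i < k \<and> Q i \<subset> Q (Suc i)}"
    by (rule card_Un_le)
  finally have "enat k \<le> enat (card {i. i < k \<and> P i \<subset> P (Suc i)}) + enat (card {i. i < k \<and> Q i \<subset> Q (Suc i)})"
    by simp
  also have "\<dots> \<le> subquot_length R M Lo K + subquot_length R M K Hi"
    by (intro add_mono subquot_length_ge_card_strict P Q monoP monoQ)
  finally show "enat k \<le> subquot_length R M Lo K + subquot_length R M K Hi" .
qed

abbreviation gen_submodule :: "'b set \<Rightarrow> 'b set" where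
  "gen_submodule S \<equiv> mod_ideal_prod R M (carrier R) S"

lemma gen_submodule_least: "submodule H R M \<Longrightarrow> S \<subseteq> H \<Longrightarrow> gen_submodule S \<subseteq> H"
  by (rule mod_ideal_prod_least) (use submoduleE(4) in blast)+

definition strict_gen_chain :: "'b set \<Rightarrow> 'b list \<Rightarrow> bool" where
  "strict_gen_chain Lo as \<longleftrightarrow> set as \<subseteq> carrier M \<and>
     (\<forall>i<length as. gen_submodule (Lo \<union> set (take i as)) \<subset> gen_submodule (Lo \<union> set (take (Suc i) as)))"

lemma strict_gen_chain_length_le:
  assumes Lo: "submodule Lo R M" and as: "strict_gen_chain Lo as"
  shows "enat (length as) \<le> subquot_length R M Lo (carrier M)"
proof (rule subquot_length_ge)
  have Loc: "Lo \<subseteq> carrier M" using submoduleE(1)[OF Lo] .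
  show "\<forall>i\<le>length as. intermediate_submodule Lo (carrier M) (gen_submodule (Lo \<union> set (take i as)))"
  proof (intro allI impI)
    fix i
    have "set (take i as) \<subseteq> carrier M"
      using as set_take_subset[of i as] unfolding strict_gen_chain_def by blast
    then have S: "Lo \<union> set (take i as) \<subseteq> carrier M" using Loc by simp
    show "intermediate_submodule Lo (carrier M) (gen_submodule (Lo \<union> set (take i as)))"
      using mod_ideal_prod_submodule[OF _ S] mod_ideal_prod_subset_carrier[OF _ S]
        subset_mod_ideal_prod_carrier[OF S]
      unfolding intermediate_submodule_def by auto
  qed
qed (use as in \<open>simp add: strict_gen_chain_def\<close>)

lemma strict_gen_chain_snoc:
  assumes Lo: "Lo \<subseteq> carrier M" and as: "strict_gen_chain Lo as"
    and y: "y \<in> carrier M" "y \<notin> gen_submodule (Lo \<union> set as)"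
  shows "strict_gen_chain Lo (as @ [y])"
  unfolding strict_gen_chain_def
proof (intro conjI allI impI)
  show "set (as @ [y]) \<subseteq> carrier M" using as y unfolding strict_gen_chain_def by auto
  fix i assume "i < length (as @ [y])"
  then consider "i < length as" | "i = length as" by fastforce
  then show "gen_submodule (Lo \<union> set (take i (as @ [y])))
      \<subset> gen_submodule (Lo \<union> set (take (Suc i) (as @ [y])))"
  proof cases
    case 1
    then show ?thesis using as unfolding strict_gen_chain_def by simp
  next
    case 2
    have S: "Lo \<union> set (as @ [y]) \<subseteq> carrier M" using Lo as y unfolding strict_gen_chain_def by auto
    have "gen_submodule (Lo \<union> set as) \<subseteq> gen_submodule (Lo \<union> set (as @ [y]))"
      by (rule mod_ideal_prod_mono[OF _ S]) auto
    moreover have "y \<in> gen_submodule (Lo \<union> set (as @ [y]))"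
      using subset_mod_ideal_prod_carrier[OF S] by auto
    ultimately show ?thesis using 2 y(2) by auto
  qed
qed

lemma exists_generators:
  assumes Lo: "submodule Lo R M" and b: "subquot_length R M Lo (carrier M) = enat b"
  obtains as where "length as \<le> b" and "set as \<subseteq> carrier M"
    and "gen_submodule (Lo \<union> set as) = carrier M"
proof -
  have bound: "strict_gen_chain Lo as \<Longrightarrow> length as \<le> b" for as
    using strict_gen_chain_length_le[OF Lo] b by fastforce
  text \<open>A longest strict chain cannot be prolonged, so its last member is all of \<open>M\<close>.\<close>
  have "\<exists>as. strict_gen_chain Lo as \<and> (\<forall>as'. strict_gen_chain Lo as' \<longrightarrow> length as' \<le> length as)"
  proof -
    define K where "K = {length as | as. strict_gen_chain Lo as}"
    have "strict_gen_chain Lo []" by (simp add: strict_gen_chain_def)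
    then have "K \<noteq> {}" "finite K"
      using bound finite_subset[of K "{..b}"] unfolding K_def by auto
    then have max: "Max K \<in> K" "\<forall>k\<in>K. k \<le> Max K" by auto
    then obtain as where "strict_gen_chain Lo as" "length as = Max K" unfolding K_def by auto
    with max(2) show ?thesis unfolding K_def by (intro exI[of _ as]) auto
  qed
  then obtain as where as: "strict_gen_chain Lo as"
    and longest: "\<And>as'. strict_gen_chain Lo as' \<Longrightarrow> length as' \<le> length as" by blast
  have S: "Lo \<union> set as \<subseteq> carrier M"
    using as submoduleE(1)[OF Lo] unfolding strict_gen_chain_def by auto
  have "gen_submodule (Lo \<union> set as) = carrier M"
  proof (rule ccontr)
    assume "gen_submodule (Lo \<union> set as) \<noteq> carrier M"
    then obtain y where "y \<in> carrier M" "y \<notin> gen_submodule (Lo \<union> set as)"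
      using mod_ideal_prod_subset_carrier[OF _ S] by blast
    then have "strict_gen_chain Lo (as @ [y])"
      using strict_gen_chain_snoc[OF submoduleE(1)[OF Lo] as] by blast
    then show False using longest by fastforce
  qed
  then show ?thesis using that as bound unfolding strict_gen_chain_def by blast
qed

lemma annihilated_submodule:
  assumes I: "I \<subseteq> carrier R"
  shows "submodule (annihilated M I) R M"
proof (rule submoduleI)
  show "annihilated M I \<subseteq> carrier M" unfolding annihilated_def by auto
  show "\<zero>\<^bsub>M\<^esub> \<in> annihilated M I" unfolding annihilated_def using I by auto
  show "\<ominus>\<^bsub>M\<^esub> x \<in> annihilated M I" if "x \<in> annihilated M I" for x
    using that I unfolding annihilated_def by (auto simp: smult_r_minus subsetD)
  show "x \<oplus>\<^bsub>M\<^esub> y \<in> annihilated M I" if "x \<in> annihilated M I" "y \<in> annihilated M I" for x y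
    using that I unfolding annihilated_def by (auto simp: smult_r_distr subsetD)
  show "c \<odot>\<^bsub>M\<^esub> x \<in> annihilated M I" if c: "c \<in> carrier R" and x: "x \<in> annihilated M I" for c x
  proof -
    have xc: "x \<in> carrier M" using x unfolding annihilated_def by auto
    have "a \<odot>\<^bsub>M\<^esub> (c \<odot>\<^bsub>M\<^esub> x) = c \<odot>\<^bsub>M\<^esub> (a \<odot>\<^bsub>M\<^esub> x)" if "a \<in> I" for a
      using that I c xc by (metis subsetD smult_assoc1 R.m_comm)
    then show ?thesis using c x unfolding annihilated_def by auto
  qed
qed


lemma mod_ideal_prod_submodule_sum_subset:
  assumes I: "I \<subseteq> carrier R" and Y: "submodule Y R M" and Z: "Z \<subseteq> carrier M"
  shows "mod_ideal_prod R M I (submodule_sum Y Z) \<subseteq> submodule_sum Y (mod_ideal_prod R M I Z)"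
proof (rule mod_ideal_prod_least[OF submodule_sum_submodule[OF Y mod_ideal_prod_submodule[OF I Z]]])
  fix c w assume c: "c \<in> I" and "w \<in> submodule_sum Y Z"
  then obtain y z where yz: "y \<in> Y" "z \<in> Z" "w = y \<oplus>\<^bsub>M\<^esub> z" unfolding submodule_sum_def by auto
  have "y \<in> carrier M" "z \<in> carrier M" "c \<in> carrier R" using yz c I Z submoduleE(1)[OF Y] by auto
  then have "c \<odot>\<^bsub>M\<^esub> w = c \<odot>\<^bsub>M\<^esub> y \<oplus>\<^bsub>M\<^esub> c \<odot>\<^bsub>M\<^esub> z" by (simp add: yz(3) smult_r_distr)
  moreover have "c \<odot>\<^bsub>M\<^esub> y \<in> Y" using submoduleE(4)[OF Y \<open>c \<in> carrier R\<close> yz(1)] .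
  moreover have "c \<odot>\<^bsub>M\<^esub> z \<in> mod_ideal_prod R M I Z" by (rule mod_ideal_prod_mem[OF c yz(2)])
  ultimately show "c \<odot>\<^bsub>M\<^esub> w \<in> submodule_sum Y (mod_ideal_prod R M I Z)"
    unfolding submodule_sum_def by blast
qed

lemma nakayama_nilpotent:
  assumes I: "ideal I R" and Y: "submodule Y R M"
    and gen: "carrier M \<subseteq> submodule_sum Y (mod_ideal_prod R M I (carrier M))"
    and nil: "mod_ideal_prod R M (ideal_power R I j) (carrier M) \<subseteq> Y"
  shows "Y = carrier M"
proof -
  have Ic: "I \<subseteq> carrier R" using ideal.Icarr[OF I] by auto
  have Yc: "Y \<subseteq> carrier M" using submoduleE(1)[OF Y] .
  have "carrier M \<subseteq> submodule_sum Y (mod_ideal_prod R M (ideal_power R I k) (carrier M))" for k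
  proof (induct k)
    case 0
    show ?case
      using submodule_sum_right[OF Y mod_ideal_prod_subset_carrier[of "carrier R" "carrier M"]]
        subset_mod_ideal_prod_carrier[of "carrier M"] by auto
  next
    case (Suc k)
    let ?IkM = "mod_ideal_prod R M (ideal_power R I k) (carrier M)"
      and ?IM = "mod_ideal_prod R M I (carrier M)"
      and ?Ik1M = "mod_ideal_prod R M (ideal_power R I (Suc k)) (carrier M)"
    have Ik: "ideal (ideal_power R I k) R" "ideal_power R I k \<subseteq> carrier R"
      using ideal_power_is_ideal[OF I] ideal_power_subset_carrier[OF I] by auto
    have IM: "?IM \<subseteq> carrier M" by (rule mod_ideal_prod_subset_carrier[OF Ic]) simp
    have YIM: "submodule_sum Y ?IM \<subseteq> carrier M"
      using submoduleE(1)[OF submodule_sum_submodule[OF Y mod_ideal_prod_submodule[OF Ic]]] by simp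
    have "?IkM \<subseteq> mod_ideal_prod R M (ideal_power R I k) (submodule_sum Y ?IM)"
      by (rule mod_ideal_prod_mono[OF Ik(2) YIM order.refl gen])
    also have "\<dots> \<subseteq> submodule_sum Y (mod_ideal_prod R M (ideal_power R I k) ?IM)"
      by (rule mod_ideal_prod_submodule_sum_subset[OF Ik(2) Y IM])
    also have "\<dots> = submodule_sum Y ?Ik1M"
      by (simp add: ideal_power_Suc mod_ideal_prod_assoc[OF Ik(1) I])
    finally have "?IkM \<subseteq> submodule_sum Y ?Ik1M" .
    moreover have "Y \<subseteq> submodule_sum Y ?Ik1M"
      by (rule submodule_sum_left[OF mod_ideal_prod_submodule[OF ideal_power_subset_carrier[OF I]] Yc])
        simp
    ultimately have "submodule_sum Y ?IkM \<subseteq> submodule_sum Y ?Ik1M"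
      using submodule_sum_least[OF submodule_sum_submodule[OF Y
          mod_ideal_prod_submodule[OF ideal_power_subset_carrier[OF I]]]] by simp
    with Suc show ?case by blast
  qed
  then have "carrier M \<subseteq> submodule_sum Y (mod_ideal_prod R M (ideal_power R I j) (carrier M))" .
  also have "\<dots> \<subseteq> Y" by (rule submodule_sum_least[OF Y order.refl nil])
  finally show ?thesis using Yc by blast
qed

end

section \<open>Homomorphisms into the annihilator of a power of the maximal ideal\<close>

context two_modules
begin

lemma a_kernel_submodule: "f \<in> carrier H \<Longrightarrow> submodule (a_kernel A L f) R A"
  by (rule A.submoduleI) (auto simp: a_kernel_def' hom_zero hom_neg hom_add hom_smult)

lemma hom_apply_Gamma:
  assumes m: "ideal m R" and GA: "Gamma R m A = carrier A"
    and f: "f \<in> carrier H" and x: "x \<in> carrier A"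
  shows "f x \<in> Gamma R m L"
proof -
  obtain k where k: "\<forall>a\<in>ideal_power R m k. a \<odot>\<^bsub>A\<^esub> x = \<zero>\<^bsub>A\<^esub>"
    using x GA unfolding Gamma_def by blast
  have "a \<odot>\<^bsub>L\<^esub> f x = \<zero>\<^bsub>L\<^esub>" if a: "a \<in> ideal_power R m k" for a
  proof -
    have "a \<in> carrier R" using a A.ideal_power_subset_carrier[OF m] by blast
    then have "a \<odot>\<^bsub>L\<^esub> f x = f (a \<odot>\<^bsub>A\<^esub> x)" using hom_smult[OF f _ x] by simp
    then show ?thesis using k a hom_zero[OF f] by simp
  qed
  then show ?thesis unfolding Gamma_def using hom_closed[OF f x] by blast
qed

lemma hom_apply_annihilated:
  assumes m: "ideal m R" and GA: "Gamma R m A = carrier A"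
    and GL: "mod_ideal_prod R L (ideal_power R m n) (Gamma R m L) = {\<zero>\<^bsub>L\<^esub>}"
    and stable: "mod_ideal_prod R A (ideal_power R m t) (carrier A)
         = mod_ideal_prod R A (ideal_power R m (Suc t)) (carrier A)"
    and s: "min n t \<le> s" and f: "f \<in> carrier H" and x: "x \<in> carrier A"
  shows "f x \<in> annihilated L (ideal_power R m s)"
proof -
  have mc: "ideal_power R m k \<subseteq> carrier R" for k by (rule A.ideal_power_subset_carrier[OF m])
  have kill: "b \<odot>\<^bsub>L\<^esub> f y = \<zero>\<^bsub>L\<^esub>" if "b \<in> ideal_power R m n" "y \<in> carrier A" for b y
    using L.mod_ideal_prod_mem[OF that(1) hom_apply_Gamma[OF m GA f that(2)]] GL by simp
  have "a \<odot>\<^bsub>L\<^esub> f x = \<zero>\<^bsub>L\<^esub>" if a: "a \<in> ideal_power R m s" for a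
  proof (cases "n \<le> s")
    case True
    then show ?thesis using kill[OF _ x] A.ideal_power_antimono[OF m True] a by blast
  next
    case False
    then have "t \<le> s" using s by simp
    then have at: "a \<in> ideal_power R m t" using A.ideal_power_antimono[OF m] a by blast
    let ?T = "mod_ideal_prod R A (ideal_power R m t) (carrier A)"
    have Tc: "?T \<subseteq> carrier A" by (rule A.mod_ideal_prod_subset_carrier[OF mc]) simp
    have "?T \<subseteq> mod_ideal_prod R A m ?T"
      using stable A.ideal_prod_commute[OF A.ideal_power_is_ideal[OF m] m, of t]
      by (simp add: A.ideal_power_Suc A.mod_ideal_prod_assoc[OF m A.ideal_power_is_ideal[OF m]])
    then have "?T \<subseteq> mod_ideal_prod R A (ideal_power R m n) ?T"
      by (rule A.subset_mod_ideal_prod_power[OF m Tc])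
    also have "\<dots> \<subseteq> a_kernel A L f"
    proof (rule A.mod_ideal_prod_least[OF a_kernel_submodule[OF f]])
      fix b z assume b: "b \<in> ideal_power R m n" and "z \<in> ?T"
      then have bz: "b \<in> carrier R" "z \<in> carrier A" using Tc mc by auto
      then have "f (b \<odot>\<^bsub>A\<^esub> z) = \<zero>\<^bsub>L\<^esub>" using hom_smult[OF f] kill[OF b] by simp
      then show "b \<odot>\<^bsub>A\<^esub> z \<in> a_kernel A L f" using bz unfolding a_kernel_def' by simp
    qed
    finally have "f (a \<odot>\<^bsub>A\<^esub> x) = \<zero>\<^bsub>L\<^esub>"
      using A.mod_ideal_prod_mem[OF at x] unfolding a_kernel_def' by auto
    moreover have "a \<in> carrier R" using at mc by blast
    ultimately show ?thesis using hom_smult[OF f _ x] by simp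
  qed
  then show ?thesis unfolding annihilated_def using hom_closed[OF f x] by blast
qed

lemma hom_eq_zero_if_vanishes_on_generators:
  assumes m: "ideal m R" and f: "f \<in> carrier H" and S: "S \<subseteq> carrier A"
    and gen: "A.gen_submodule (mod_ideal_prod R A m (carrier A) \<union> S) = carrier A"
    and fS: "\<forall>x\<in>S. f x = \<zero>\<^bsub>L\<^esub>"
    and fx: "\<forall>x\<in>carrier A. f x \<in> annihilated L (ideal_power R m s)"
  shows "f = \<zero>\<^bsub>H\<^esub>"
proof -
  have mc: "m \<subseteq> carrier R" "ideal_power R m s \<subseteq> carrier R"
    using ideal.Icarr[OF m] A.ideal_power_subset_carrier[OF m] by auto
  let ?Y = "a_kernel A L f" and ?mA = "mod_ideal_prod R A m (carrier A)"
  have Y: "submodule ?Y R A" by (rule a_kernel_submodule[OF f])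
  have mA: "submodule ?mA R A" by (rule A.mod_ideal_prod_submodule[OF mc(1)]) simp
  have "S \<subseteq> ?Y" using S fS unfolding a_kernel_def' by blast
  also have "?Y \<subseteq> A.submodule_sum ?Y ?mA"
    by (rule A.submodule_sum_left[OF mA A.submoduleE(1)[OF Y]])
  finally have "?mA \<union> S \<subseteq> A.submodule_sum ?Y ?mA"
    using A.submodule_sum_right[OF Y A.submoduleE(1)[OF mA]] by blast
  then have "carrier A \<subseteq> A.submodule_sum ?Y ?mA"
    using A.gen_submodule_least[OF A.submodule_sum_submodule[OF Y mA]] gen by blast
  moreover have "mod_ideal_prod R A (ideal_power R m s) (carrier A) \<subseteq> ?Y"
  proof (rule A.mod_ideal_prod_least[OF Y])
    fix b x assume b: "b \<in> ideal_power R m s" and x: "x \<in> carrier A"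
    then have "b \<in> carrier R" using mc(2) by blast
    then have "f (b \<odot>\<^bsub>A\<^esub> x) = b \<odot>\<^bsub>L\<^esub> f x" by (rule hom_smult[OF f _ x])
    also have "\<dots> = \<zero>\<^bsub>L\<^esub>" using fx b x unfolding annihilated_def by blast
    finally show "b \<odot>\<^bsub>A\<^esub> x \<in> ?Y" using \<open>b \<in> carrier R\<close> x unfolding a_kernel_def' by simp
  qed
  ultimately have "?Y = carrier A" by (rule A.nakayama_nilpotent[OF m Y])
  then show ?thesis
    by (intro hom_eqI[OF f Hom_mod_zero_closed]) (auto simp: a_kernel_def' Hom_mod_zero)
qed

definition homs_vanishing_on :: "'d set \<Rightarrow> ('d \<Rightarrow> 'b) set" where
  "homs_vanishing_on S = {f \<in> carrier H. \<forall>x\<in>S. f x = \<zero>\<^bsub>L\<^esub>}"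

lemma homs_vanishing_on_submodule:
  assumes S: "S \<subseteq> carrier A"
  shows "submodule (homs_vanishing_on S) R H"
proof (rule Hom.submoduleI)
  show "\<zero>\<^bsub>H\<^esub> \<in> homs_vanishing_on S"
    using Hom_mod_zero_closed S unfolding homs_vanishing_on_def by (auto simp: Hom_mod_zero)
  show "\<ominus>\<^bsub>H\<^esub> f \<in> homs_vanishing_on S" if "f \<in> homs_vanishing_on S" for f
    using that S Hom.M.a_inv_closed unfolding homs_vanishing_on_def by (auto simp: Hom_mod_minus_apply)
  show "f \<oplus>\<^bsub>H\<^esub> g \<in> homs_vanishing_on S" if "f \<in> homs_vanishing_on S" "g \<in> homs_vanishing_on S" for f g
    using that S Hom_mod_add_closed unfolding homs_vanishing_on_def by (auto simp: Hom_mod_add)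
  show "a \<odot>\<^bsub>H\<^esub> f \<in> homs_vanishing_on S" if "a \<in> carrier R" "f \<in> homs_vanishing_on S" for a f
    using that S Hom_mod_smult_closed unfolding homs_vanishing_on_def by (auto simp: Hom_mod_smult)
qed (auto simp: homs_vanishing_on_def)

lemma evaluation_submodule:
  assumes G: "submodule G R H" and a: "a \<in> carrier A"
  shows "submodule ((\<lambda>g. g a) ` G) R L"
proof (rule L.submoduleI)
  have Gc: "G \<subseteq> carrier H" using Hom.submoduleE(1)[OF G] .
  show "(\<lambda>g. g a) ` G \<subseteq> carrier L" using Gc hom_closed a by auto
  have "\<zero>\<^bsub>L\<^esub> = \<zero>\<^bsub>H\<^esub> a" using a by (simp add: Hom_mod_zero)
  then show "\<zero>\<^bsub>L\<^esub> \<in> (\<lambda>g. g a) ` G" using Hom.submodule_zero[OF G] by blast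
  fix y y' assume "y \<in> (\<lambda>g. g a) ` G"
  then obtain g where g: "g \<in> G" "y = g a" by blast
  have "(\<ominus>\<^bsub>H\<^esub> g) a = \<ominus>\<^bsub>L\<^esub> y" using Hom_mod_minus_apply g Gc a by auto
  then show "\<ominus>\<^bsub>L\<^esub> y \<in> (\<lambda>g. g a) ` G" using Hom.submoduleE(3)[OF G g(1)] by (metis image_eqI)
  show "c \<odot>\<^bsub>L\<^esub> y \<in> (\<lambda>g. g a) ` G" if "c \<in> carrier R" for c
  proof -
    have "(c \<odot>\<^bsub>H\<^esub> g) a = c \<odot>\<^bsub>L\<^esub> y" using a g(2) by (simp add: Hom_mod_smult)
    then show ?thesis using Hom.submoduleE(4)[OF G that g(1)] by (metis image_eqI)
  qed
  assume "y' \<in> (\<lambda>g. g a) ` G"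
  then obtain g' where g': "g' \<in> G" "y' = g' a" by blast
  have "(g \<oplus>\<^bsub>H\<^esub> g') a = y \<oplus>\<^bsub>L\<^esub> y'" using a g(2) g'(2) by (simp add: Hom_mod_add)
  then show "y \<oplus>\<^bsub>L\<^esub> y' \<in> (\<lambda>g. g a) ` G" using Hom.submoduleE(5)[OF G g(1) g'(1)] by (metis image_eqI)
qed

text \<open>Between \<open>homs_vanishing_on (insert a S)\<close> and \<open>homs_vanishing_on S\<close>, a homomorphism
  is determined modulo the smaller submodule by its value at \<open>a\<close>.\<close>

lemma evaluation_strict_mono:
  assumes G: "submodule G R H" and G': "submodule G' R H" and GG': "G \<subset> G'"
    and low: "homs_vanishing_on (insert a S) \<subseteq> G" and up: "G' \<subseteq> homs_vanishing_on S"
    and a: "a \<in> carrier A" and S: "S \<subseteq> carrier A"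
  shows "(\<lambda>g. g a) ` G \<subset> (\<lambda>g. g a) ` G'"
proof -
  obtain g' where g': "g' \<in> G'" "g' \<notin> G" using GG' by blast
  have "g' a \<notin> (\<lambda>g. g a) ` G"
  proof
    assume "g' a \<in> (\<lambda>g. g a) ` G"
    then obtain g where g: "g \<in> G" "g' a = g a" by (rule imageE)
    have gc: "g \<in> carrier H" "g' \<in> carrier H"
      using g(1) g'(1) GG' Hom.submoduleE(1)[OF G'] by auto
    let ?d = "g' \<oplus>\<^bsub>H\<^esub> \<ominus>\<^bsub>H\<^esub> g"
    have "\<ominus>\<^bsub>H\<^esub> g \<in> G'" using Hom.submoduleE(3)[OF G'] g(1) GG' by blast
    then have dG': "?d \<in> G'" using Hom.submoduleE(5)[OF G' g'(1)] by blast
    have dv: "?d x = g' x \<oplus>\<^bsub>L\<^esub> \<ominus>\<^bsub>L\<^esub> g x" if "x \<in> carrier A" for x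
      using that gc by (simp add: Hom_mod_add Hom_mod_minus_apply)
    have "g x = \<zero>\<^bsub>L\<^esub>" "g' x = \<zero>\<^bsub>L\<^esub>" if "x \<in> S" for x
      using that g(1) g'(1) GG' up unfolding homs_vanishing_on_def by auto
    moreover have "?d a = \<zero>\<^bsub>L\<^esub>" using dv[OF a] g(2) hom_closed[OF gc(1) a] by (simp add: L.r_neg)
    moreover have "?d \<in> carrier H" using dG' Hom.submoduleE(1)[OF G'] by blast
    ultimately have "?d \<in> homs_vanishing_on (insert a S)"
      using dv S unfolding homs_vanishing_on_def by (auto simp: L.r_neg)
    then have "?d \<oplus>\<^bsub>H\<^esub> g \<in> G" using low Hom.submoduleE(5)[OF G _ g(1)] by blast
    moreover have "?d \<oplus>\<^bsub>H\<^esub> g = g'" using gc by (simp add: Hom.M.a_assoc Hom.M.l_neg)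
    ultimately show False using g'(2) by simp
  qed
  then show ?thesis using GG' g'(1) by blast
qed

lemma subquot_length_homs_vanishing_insert:
  assumes N: "submodule N R L" and img: "\<forall>f\<in>carrier H. \<forall>x\<in>carrier A. f x \<in> N"
    and a: "a \<in> carrier A" and S: "S \<subseteq> carrier A"
  shows "subquot_length R H (homs_vanishing_on (insert a S)) (homs_vanishing_on S) \<le> mod_length R L N"
  unfolding mod_length_def
proof (rule Hom.subquot_length_le)
  fix k G
  assume G: "\<forall>i\<le>k. Hom.intermediate_submodule (homs_vanishing_on (insert a S)) (homs_vanishing_on S) (G i)"
    and st: "\<forall>i<k. G i \<subset> G (Suc i)"
  have Gi: "submodule (G i) R H" "homs_vanishing_on (insert a S) \<subseteq> G i" "G i \<subseteq> homs_vanishing_on S"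
    if "i \<le> k" for i
    using G that unfolding Hom.intermediate_submodule_def by auto
  show "enat k \<le> subquot_length R L {\<zero>\<^bsub>L\<^esub>} N"
  proof (rule L.subquot_length_ge)
    show "\<forall>i\<le>k. L.intermediate_submodule {\<zero>\<^bsub>L\<^esub>} N ((\<lambda>g. g a) ` G i)"
      using evaluation_submodule[OF Gi(1) a] L.submodule_zero Hom.submoduleE(1)[OF Gi(1)] img a
      unfolding L.intermediate_submodule_def by fast
    show "\<forall>i<k. (\<lambda>g. g a) ` G i \<subset> (\<lambda>g. g a) ` G (Suc i)"
      using evaluation_strict_mono[OF Gi(1) Gi(1) _ Gi(2) Gi(3) a S] st by (simp add: Suc_leI)
  qed
qed

lemma subquot_length_homs_vanishing_on_le:
  assumes N: "submodule N R L" and img: "\<forall>f\<in>carrier H. \<forall>x\<in>carrier A. f x \<in> N"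
    and as: "set as \<subseteq> carrier A"
  shows "subquot_length R H (homs_vanishing_on (set as)) (carrier H) \<le> enat (length as) * mod_length R L N"
  using as
proof (induct as)
  case Nil
  then show ?case by (simp add: homs_vanishing_on_def Hom.subquot_length_refl)
next
  case (Cons a as)
  have sub: "submodule (homs_vanishing_on (insert a (set as))) R H" "submodule (homs_vanishing_on (set as)) R H"
    using homs_vanishing_on_submodule Cons.prems by auto
  have "subquot_length R H (homs_vanishing_on (insert a (set as))) (carrier H)
      \<le> subquot_length R H (homs_vanishing_on (insert a (set as))) (homs_vanishing_on (set as))
        + subquot_length R H (homs_vanishing_on (set as)) (carrier H)"
    by (rule Hom.subquot_length_triangle[OF Hom.carrier_is_submodule sub(2)])
      (use Hom.submoduleE(1)[OF sub(2)] in \<open>auto simp: homs_vanishing_on_def\<close>)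
  also have "\<dots> \<le> mod_length R L N + enat (length as) * mod_length R L N"
    using Cons by (intro add_mono subquot_length_homs_vanishing_insert[OF N img]) auto
  also have "\<dots> = enat (length (a # as)) * mod_length R L N"
    by (simp add: eSuc_enat[symmetric] eSuc_plus_1 distrib_right add.commute)
  finally show ?case by simp
qed

lemma mod_length_Hom_mod_le:
  assumes m: "ideal m R" and img: "\<forall>f\<in>carrier H. \<forall>x\<in>carrier A. f x \<in> annihilated L (ideal_power R m s)"
  shows "mod_length R H (carrier H) \<le> beta0 R m A * mod_length R L (annihilated L (ideal_power R m s))"
proof -
  let ?N = "annihilated L (ideal_power R m s)"
  have N: "submodule ?N R L" by (rule L.annihilated_submodule[OF A.ideal_power_subset_carrier[OF m]])
  show ?thesis
  proof (cases "beta0 R m A")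
    case (enat b)
    have mc: "m \<subseteq> carrier R" using ideal.Icarr[OF m] by blast
    obtain as where as: "length as \<le> b" "set as \<subseteq> carrier A"
      "A.gen_submodule (mod_ideal_prod R A m (carrier A) \<union> set as) = carrier A"
      using A.exists_generators[OF A.mod_ideal_prod_submodule[OF mc] enat[unfolded beta0_def]] by auto
    have "f = \<zero>\<^bsub>H\<^esub>" if "f \<in> homs_vanishing_on (set as)" for f
      using that img hom_eq_zero_if_vanishes_on_generators[OF m _ as(2,3), of f]
      unfolding homs_vanishing_on_def by blast
    then have "homs_vanishing_on (set as) = {\<zero>\<^bsub>H\<^esub>}"
      using Hom.submodule_zero[OF homs_vanishing_on_submodule[OF as(2)]] by blast
    then have "mod_length R H (carrier H) \<le> enat (length as) * mod_length R L ?N"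
      using subquot_length_homs_vanishing_on_le[OF N _ as(2)] img unfolding mod_length_def by simp
    also have "\<dots> \<le> beta0 R m A * mod_length R L ?N" using as(1) enat by (intro mult_right_mono) auto
    finally show ?thesis .
  next
    case infinity
    show ?thesis
    proof (cases "mod_length R L ?N = 0")
      case True
      then have "carrier H = {\<zero>\<^bsub>H\<^esub>}"
        using L.mod_length_eq_0_iff[OF N] img Hom_mod_zero_closed
        by (auto intro!: hom_eqI simp: Hom_mod_zero)
      then show ?thesis by (simp add: mod_length_def Hom.subquot_length_refl)
    qed (simp add: infinity imult_infinity)
  qed
qed

end

theorem theorem2p11:
  fixes R :: "('a, 'c) ring_scheme" and m :: "'a set"
    and A :: "('a, 'd) module" and L :: "('a, 'b) module"
    and n t s :: nat
  assumes "noeth_local_ring R m"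
    and "module R A" and "module R L"
    and "artinian_module R A"
    and "n \<ge> 1"
    and "mod_ideal_prod R L (ideal_power R m n) (Gamma R m L) = {\<zero>\<^bsub>L\<^esub>}"
    and "mod_ideal_prod R A (ideal_power R m t) (carrier A)
         = mod_ideal_prod R A (ideal_power R m (Suc t)) (carrier A)"
    and "s \<ge> min n t"
  shows "mod_length R (Hom_mod R A L) (carrier (Hom_mod R A L))
         \<le> beta0 R m A * mod_length R L (annihilated L (ideal_power R m s))"
proof -
  interpret local_module R m A
    using assms(1,2) by (simp add: noeth_local_ring_def local_module_def local_ring_def
        local_ring_axioms_def plain_module_def module_def)
  interpret two_modules R A L
    using assms(2,3) by (simp add: two_modules_def plain_module_def)
  have "Gamma R m A = carrier A"
    using assms(1,4) Gamma_eq_carrier by (simp add: noeth_local_ring_def)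
  then have "\<forall>f\<in>carrier H. \<forall>x\<in>carrier A. f x \<in> annihilated L (ideal_power R m s)"
    using hom_apply_annihilated[OF m_ideal _ assms(6,7,8)] by blast
  then show ?thesis by (rule mod_length_Hom_mod_le[OF m_ideal])
qed

end
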